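(* Consider the ReLU network with skipped connections, training data $(x^{(i)},y^{(i)})_{i=1}^T\subset\mathbb R^{d_0}\times\mathbb R^{d_0}$ and cost $C=\frac12\sum_{i=1}^T\|F(x^{(i)})-y^{(i)}\|^2$. Fix $l\in[\kappa]$ and define the gradient of $C$ with respect to $\tilde S^l$ (treated as a free matrix) by the chain-rule expression $$\nabla_{\tilde S^l}C:=\sum_{i=1}^T\big(\chi^l(x^{(i)})\otimes I_{d_{l-1}}\big)\,\tilde\Lambda^l(x^{(i)})\,\tilde\Upsilon^{l-1}(x^{(i)})^\top\big(F(x^{(i)})-y^{(i)}\big)\in\mathbb R^{s_ld_{l-1}}$$ (this is the true gradient with respect to $\mathrm{vec}(\tilde S^l)$ whenever no decoder pre-activation at layers $1,\dots,l$ vanishes at any training input). Let $\Gamma^l=[\chi^l(x^{(1)})\cdots\chi^l(x^{(T)})]\in\mathbb R^{s_l\times T}$ and assume $s_l\ge T$ and $d_{l-1}\ge d_0$. Then $$\|\nabla_{\tilde S^l}C\|_F\ge\sigma_{\min}(\Gamma^l)\,\min_{i\in[T]}\sigma_{\min}\big(\tilde\Lambda^l(x^{(i)})\tilde\Upsilon^{l-1}(x^{(i)})^\top\big)\sqrt{2C}$$ and $$\|\nabla_{\tilde S^l}C\|_F\le\sigma_{\max}(\Gamma^l)\,\max_{i\in[T]}\sigma_{\max}\big(\tilde\Lambda^l(x^{(i)})\tilde\Upsilon^{l-1}(x^{(i)})^\top\big)\sqrt{2C}.$$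
   Context: For $A\in\mathbb R^{n\times m}$ with $n\ge m$, $\sigma_{\min}(A)$ and $\sigma_{\max}(A)$ denote the smallest and largest of its $m$ singular values. $\otimes$ is the Kronecker product, $\|\cdot\|_F$ the Frobenius (Euclidean) norm, $\sigma(t)=\max(t,0)$ entrywise, $[n]=\{1,\dots,n\}$. Network with skipped connections on inputs $x\in\mathbb R^{d_0}$, with layer dimensions $d_0,\dots,d_\kappa$ and skip dimensions $s_1,\dots,s_\kappa$: given matrices $E^l\in\mathbb R^{d_{l-1}\times d_l}$, $D^l\in\mathbb R^{d_{l-1}\times d_l}$, $S^l\in\mathbb R^{d_{l-1}\times s_l}$, $\tilde S^l\in\mathbb R^{d_{l-1}\times s_l}$ ($l\in[\kappa]$), define $\xi^0=x$, $\xi^l=\sigma(E^{l\top}\xi^{l-1})$, $\chi^l=\sigma(S^{l\top}\xi^{l-1})$, $\tilde\xi^\kappa=\xi^\kappa$, $\tilde\xi^{l-1}=\sigma(D^l\tilde\xi^l+\tilde S^l\chi^l)$ (decoder pre-activation at layer $l$: $D^l\tilde\xi^l+\tilde S^l\chi^l$), $F(x)=\tilde\xi^0$. $\tilde\Lambda^l(x)\in\mathbb R^{d_{l-1}\times d_{l-1}}$ is diagonal with $i$-th entry $1$ if the $i$-th decoder pre-activation at layer $l$ is $>0$ and $0$ otherwise; $\tilde\Upsilon^0=I_{d_0}$, $\tilde\Upsilon^l(x)=\tilde\Upsilon^{l-1}(x)\tilde\Lambda^l(x)D^l\in\mathbb R^{d_0\times d_l}$. *)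

theory Defs
  imports Complex_Main "Jordan_Normal_Form.Char_Poly"
begin

text \<open>Matrices/vectors are Jordan_Normal_Form matrices/vectors (dimensions carried in the
value).  Layer parameters are families indexed by the layer number l (used for l = 1..kappa).\<close>

definition relu :: "real vec \<Rightarrow> real vec" where
  "relu v = map_vec (\<lambda>t. max t 0) v"

definition vnorm :: "real vec \<Rightarrow> real" where
  "vnorm v = sqrt (\<Sum>i<dim_vec v. (v $ i)^2)"

definition kron :: "real mat \<Rightarrow> real mat \<Rightarrow> real mat" where
  "kron A B = mat (dim_row A * dim_row B) (dim_col A * dim_col B)
      (\<lambda>(i,j). A $$ (i div dim_row B, j div dim_col B) * B $$ (i mod dim_row B, j mod dim_col B))"

definition col_mat :: "real vec \<Rightarrow> real mat" where
  "col_mat v = mat (dim_vec v) 1 (\<lambda>(i,j). v $ i)"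

primrec enc :: "(nat \<Rightarrow> real mat) \<Rightarrow> real vec \<Rightarrow> nat \<Rightarrow> real vec" where
  "enc E x 0 = x"
| "enc E x (Suc l) = relu (transpose_mat (E (Suc l)) *\<^sub>v enc E x l)"

definition skip :: "(nat \<Rightarrow> real mat) \<Rightarrow> (nat \<Rightarrow> real mat) \<Rightarrow> real vec \<Rightarrow> nat \<Rightarrow> real vec" where
  "skip E S x l = relu (transpose_mat (S l) *\<^sub>v enc E x (l - 1))"

text \<open>Decoder, counted by steps: dec_aux j = tilde xi^(kappa - j).\<close>
primrec dec_aux :: "nat \<Rightarrow> (nat \<Rightarrow> real mat) \<Rightarrow> (nat \<Rightarrow> real mat) \<Rightarrow> (nat \<Rightarrow> real mat)
    \<Rightarrow> (nat \<Rightarrow> real mat) \<Rightarrow> real vec \<Rightarrow> nat \<Rightarrow> real vec" where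
  "dec_aux \<kappa> E D S St x 0 = enc E x \<kappa>"
| "dec_aux \<kappa> E D S St x (Suc j) =
     relu (D (\<kappa> - j) *\<^sub>v dec_aux \<kappa> E D S St x j + St (\<kappa> - j) *\<^sub>v skip E S x (\<kappa> - j))"

definition dec where
  "dec \<kappa> E D S St x l = dec_aux \<kappa> E D S St x (\<kappa> - l)"

definition net where
  "net \<kappa> E D S St x = dec \<kappa> E D S St x 0"

definition preact where
  "preact \<kappa> E D S St x l = D l *\<^sub>v dec \<kappa> E D S St x l + St l *\<^sub>v skip E S x l"

definition Lam where
  "Lam \<kappa> E D S St x l =
     (let p = preact \<kappa> E D S St x l in
      mat (dim_vec p) (dim_vec p) (\<lambda>(i,j). if i = j \<and> p $ i > 0 then 1 else 0))"

primrec Ups where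
  "Ups \<kappa> E D S St x d0 0 = 1\<^sub>m d0"
| "Ups \<kappa> E D S St x d0 (Suc l) = Ups \<kappa> E D S St x d0 l * Lam \<kappa> E D S St x (Suc l) * D (Suc l)"

definition sing_vals :: "real mat \<Rightarrow> real set" where
  "sing_vals A = sqrt ` {\<mu>. eigenvalue (transpose_mat A * A) \<mu>}"

definition sigma_min :: "real mat \<Rightarrow> real" where
  "sigma_min A = Min (sing_vals A)"

definition sigma_max :: "real mat \<Rightarrow> real" where
  "sigma_max A = Max (sing_vals A)"

end

theory Submission
  imports Defs "HOL-Analysis.Function_Topology" "Jordan_Normal_Form.Spectral_Radius"
begin

text \<open>With \<open>r\<^sub>i = F(x\<^sub>i) - y\<^sub>i\<close> and \<open>w\<^sub>i = M\<^sub>i r\<^sub>i\<close>, the gradient is the vectorisation of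
  \<open>\<Sum>\<^sub>i \<chi>\<^sub>i w\<^sub>i\<^sup>T\<close>, so its squared norm is \<open>\<Sum>\<^sub>b |\<Gamma> \<omega>\<^sub>b|\<^sup>2\<close>, where \<open>\<omega>\<^sub>b\<close> collects the
  \<open>b\<close>-th entries of the \<open>w\<^sub>i\<close>. The Rayleigh bounds
  \<open>\<sigma>\<^sub>m\<^sub>i\<^sub>n(A)\<^sup>2 |v|\<^sup>2 \<le> |A v|\<^sup>2 \<le> \<sigma>\<^sub>m\<^sub>a\<^sub>x(A)\<^sup>2 |v|\<^sup>2\<close>, applied first to \<open>\<Gamma>\<close> and then to each
  \<open>M\<^sub>i\<close>, give the claim since \<open>\<Sum>\<^sub>i |r\<^sub>i|\<^sup>2 = 2C\<close>. The Rayleigh bounds come from the extrema of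
  the quadratic form of \<open>A\<^sup>T A\<close> on the (compact) unit sphere: a minimiser \<open>u\<close> with value
  \<open>\<lambda>\<close> makes \<open>A\<^sup>T A - \<lambda> I\<close> positive semidefinite and vanishing on \<open>u\<close>, hence \<open>u\<close> is an
  eigenvector.\<close>

lemma scalar_prod_self_nonneg: "0 \<le> v \<bullet> (v :: real vec)"
  using conjugate_square_ge_0_vec[of v] by simp

lemma scalar_prod_self_eq_0_iff:
  "(v :: real vec) \<in> carrier_vec n \<Longrightarrow> v \<bullet> v = 0 \<longleftrightarrow> v = 0\<^sub>v n"
  using conjugate_square_eq_0_vec[of v n] by simp

lemma scalar_prod_self_sum_sq: "(v :: real vec) \<in> carrier_vec m \<Longrightarrow> v \<bullet> v = (\<Sum>i<m. (v $ i)\<^sup>2)"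
  by (simp add: scalar_prod_def atLeast0LessThan power2_eq_square)

lemma vnorm_eq_sqrt_scalar_prod: "vnorm v = sqrt (v \<bullet> v)"
  by (simp add: vnorm_def scalar_prod_def atLeast0LessThan power2_eq_square)

lemma sum_lessThan_mult_div_mod:
  fixes f :: "nat \<Rightarrow> nat \<Rightarrow> 'a :: comm_monoid_add"
  shows "(\<Sum>k<a * b. f (k div b) (k mod b)) = (\<Sum>i<a. \<Sum>j<b. f i j)"
proof -
  have "(\<Sum>k<a * b. f (k div b) (k mod b))
      = (\<Sum>i<a. \<Sum>k\<in>{0 + i * b..<b + i * b}. f (k div b) (k mod b))"
    using sum.nat_group[of "\<lambda>k. f (k div b) (k mod b)" b a] by (simp add: add.commute)
  also have "\<dots> = (\<Sum>i<a. \<Sum>j<b. f ((j + i * b) div b) ((j + i * b) mod b))"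
    by (simp only: sum.shift_bounds_nat_ivl atLeast0LessThan)
  also have "\<dots> = (\<Sum>i<a. \<Sum>j<b. f i j)"
    by (intro sum.cong) auto
  finally show ?thesis .
qed

lemma quadratic_nonneg_imp_linear_coeff_zero:
  fixes a b :: real
  assumes "b \<ge> 0" and "\<And>t. 0 \<le> 2 * t * a + t\<^sup>2 * b"
  shows "a = 0"
proof -
  define t where "t = - a / (b + 1)"
  have "t * (b + 1) = - a" using assms(1) unfolding t_def by simp
  have "0 \<le> (2 * t * a + t\<^sup>2 * b) * (b + 1)\<^sup>2" using assms by simp
  also have "\<dots> = 2 * a * (t * (b + 1)) * (b + 1) + (t * (b + 1))\<^sup>2 * b"
    by (simp add: algebra_simps power2_eq_square)
  also have "\<dots> = - a\<^sup>2 * (b + 2)"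
    unfolding \<open>t * (b + 1) = - a\<close> by (simp add: algebra_simps power2_eq_square)
  finally show ?thesis using assms(1) by (simp add: mult_le_0_iff)
qed

lemma psd_quadratic_form_zero_imp_mult_zero:
  fixes C :: "real mat"
  assumes C: "C \<in> carrier_mat n n" and sym: "transpose_mat C = C"
    and psd: "\<And>v. v \<in> carrier_vec n \<Longrightarrow> 0 \<le> v \<bullet> (C *\<^sub>v v)"
    and u: "u \<in> carrier_vec n" and zero: "u \<bullet> (C *\<^sub>v u) = 0"
  shows "C *\<^sub>v u = 0\<^sub>v n"
proof -
  define w where "w = C *\<^sub>v u"
  have w: "w \<in> carrier_vec n" using C u unfolding w_def by simp
  have Cw: "C *\<^sub>v w \<in> carrier_vec n" using C w by simp
  have uCw: "u \<bullet> (C *\<^sub>v w) = w \<bullet> w"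
    using transpose_vec_mult_scalar[OF C w u] sym unfolding w_def by simp
  have "w \<bullet> w = 0"
  proof (rule quadratic_nonneg_imp_linear_coeff_zero)
    show "0 \<le> w \<bullet> (C *\<^sub>v w)" using psd[OF w] .
    fix t :: real
    have "(u + t \<cdot>\<^sub>v w) \<bullet> (C *\<^sub>v (u + t \<cdot>\<^sub>v w))
        = u \<bullet> (C *\<^sub>v u) + t * (u \<bullet> (C *\<^sub>v w)) + t * (w \<bullet> w) + t\<^sup>2 * (w \<bullet> (C *\<^sub>v w))"
      using C u w Cw
      by (simp add: mult_add_distrib_mat_vec[OF C] mult_mat_vec[OF C] add_scalar_prod_distrib[of _ n]
          scalar_prod_add_distrib[of _ n] w_def[symmetric] algebra_simps power2_eq_square)
    then show "0 \<le> 2 * t * (w \<bullet> w) + t\<^sup>2 * (w \<bullet> (C *\<^sub>v w))"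
      using psd[of "u + t \<cdot>\<^sub>v w"] u w zero uCw by simp
  qed
  then show ?thesis using scalar_prod_self_eq_0_iff[OF w] unfolding w_def by simp
qed

lemma quadratic_form_attains_min_on_unit_sphere:
  fixes B :: "real mat"
  assumes B: "B \<in> carrier_mat m m" and m: "0 < m"
  obtains u where "u \<in> carrier_vec m" "u \<bullet> u = 1"
    "\<And>v. v \<in> carrier_vec m \<Longrightarrow> v \<bullet> v = 1 \<Longrightarrow> u \<bullet> (B *\<^sub>v u) \<le> v \<bullet> (B *\<^sub>v v)"
proof -
  define q where "q f = vec m f \<bullet> (B *\<^sub>v vec m f)" for f :: "nat \<Rightarrow> real"
  define nsq where "nsq f = vec m f \<bullet> vec m f" for f :: "nat \<Rightarrow> real"
  define X where "X i = (if i < m then {-1..1} else {0 :: real})" for i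
  \<comment> \<open>The unit sphere, with vectors represented by coefficient functions vanishing from \<open>m\<close> on.\<close>
  define K where "K = PiE UNIV X \<inter> {f. nsq f = 1}"
  have q_cont: "continuous_on UNIV q"
  proof -
    have "q = (\<lambda>f. \<Sum>i<m. f i * (\<Sum>j<m. B $$ (i, j) * f j))"
      using B
      by (intro ext) (simp add: q_def scalar_prod_def mult_mat_vec_def row_def atLeast0LessThan)
    then show ?thesis
      by (simp only:) (intro continuous_intros continuous_on_product_then_coordinatewise continuous_on_id)
  qed
  have K_compact: "compact K"
  proof -
    have "compactin (product_topology (\<lambda>i. euclidean) UNIV) (PiE UNIV X)"
      unfolding compactin_PiE by (auto simp: X_def)
    then have "compact (PiE UNIV X)"
      by (simp add: euclidean_product_topology compactin_euclidean_iff)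
    moreover have "nsq = (\<lambda>f. \<Sum>i<m. (f i)\<^sup>2)"
      by (auto simp: nsq_def scalar_prod_self_sum_sq[of _ m])
    then have "closed {f. nsq f = 1}"
      by (simp only:) (intro closed_Collect_eq continuous_intros
          continuous_on_product_then_coordinatewise continuous_on_id)
    ultimately show ?thesis unfolding K_def by (rule compact_Int_closed)
  qed
  have coeffs_in_K: "(\<lambda>i. if i < m then v $ i else 0) \<in> K"
    if v: "v \<in> carrier_vec m" "v \<bullet> v = 1" for v
  proof -
    have "vec m (\<lambda>i. if i < m then v $ i else 0) = v" using v by auto
    moreover have "v $ i \<in> {-1..1}" if "i < m" for i
    proof -
      have "(v $ i)\<^sup>2 \<le> (\<Sum>j<m. (v $ j)\<^sup>2)" by (rule member_le_sum) (use that in auto)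
      then show ?thesis using v by (simp add: scalar_prod_self_sum_sq abs_square_le_1 abs_le_iff)
    qed
    ultimately show ?thesis using v by (auto simp: K_def X_def nsq_def)
  qed
  have "unit_vec m 0 \<bullet> unit_vec m 0 = (1 :: real)" using m by simp
  then have "K \<noteq> {}" using coeffs_in_K[of "unit_vec m 0"] by auto
  then obtain f where f: "f \<in> K" and f_min: "\<And>g. g \<in> K \<Longrightarrow> q f \<le> q g"
    using continuous_attains_inf[OF K_compact _ continuous_on_subset[OF q_cont]] by blast
  show ?thesis
  proof
    show "vec m f \<in> carrier_vec m" by simp
    show "vec m f \<bullet> vec m f = 1" using f by (simp add: K_def nsq_def)
    fix v :: "real vec" assume v: "v \<in> carrier_vec m" "v \<bullet> v = 1"
    have "vec m (\<lambda>i. if i < m then v $ i else 0) = v" using v by auto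
    then show "vec m f \<bullet> (B *\<^sub>v vec m f) \<le> v \<bullet> (B *\<^sub>v v)"
      using f_min[OF coeffs_in_K[OF v]] by (simp add: q_def)
  qed
qed

lemma char_matrix_quadratic_form:
  fixes B :: "real mat"
  assumes "B \<in> carrier_mat m m" and "v \<in> carrier_vec m"
  shows "v \<bullet> (char_matrix B e *\<^sub>v v) = v \<bullet> (B *\<^sub>v v) - e * (v \<bullet> v)"
proof -
  have "(- e \<cdot>\<^sub>m 1\<^sub>m m) *\<^sub>v v = - e \<cdot>\<^sub>v v"
    using assms(2) by (intro eq_vecI) (auto simp: row_smult)
  then show ?thesis
    using assms
    by (simp add: char_matrix_def add_mult_distrib_mat_vec[of _ m m] scalar_prod_add_distrib[of _ m])
qed

lemma min_eigenvalue_le_rayleigh: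
  fixes B :: "real mat"
  assumes B: "B \<in> carrier_mat m m" and sym: "transpose_mat B = B" and m: "0 < m"
  obtains e where "eigenvalue B e" "\<And>v. v \<in> carrier_vec m \<Longrightarrow> e * (v \<bullet> v) \<le> v \<bullet> (B *\<^sub>v v)"
proof -
  obtain u where u: "u \<in> carrier_vec m" "u \<bullet> u = 1"
    and u_min: "\<And>v. v \<in> carrier_vec m \<Longrightarrow> v \<bullet> v = 1 \<Longrightarrow> u \<bullet> (B *\<^sub>v u) \<le> v \<bullet> (B *\<^sub>v v)"
    using quadratic_form_attains_min_on_unit_sphere[OF B m] by blast
  define e where "e = u \<bullet> (B *\<^sub>v u)"
  have rayleigh: "e * (v \<bullet> v) \<le> v \<bullet> (B *\<^sub>v v)" if v: "v \<in> carrier_vec m" for v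
  proof (cases "v = 0\<^sub>v m")
    case False
    define c where "c = sqrt (v \<bullet> v)"
    have vv: "0 < v \<bullet> v"
      using False scalar_prod_self_nonneg[of v] scalar_prod_self_eq_0_iff[OF v] by linarith
    then have c: "0 < c" "c\<^sup>2 = v \<bullet> v" by (simp_all add: c_def)
    have "e \<le> (inverse c \<cdot>\<^sub>v v) \<bullet> (B *\<^sub>v (inverse c \<cdot>\<^sub>v v))"
      unfolding e_def using v c B
      by (intro u_min) (simp_all add: mult_mat_vec[OF B] c(2)[symmetric] field_simps power2_eq_square)
    also have "\<dots> = v \<bullet> (B *\<^sub>v v) / c\<^sup>2"
      using v B by (simp add: mult_mat_vec[OF B] power2_eq_square field_simps)
    finally show ?thesis using c(2) vv by (simp add: pos_le_divide_eq)
  qed (use B in \<open>simp add: scalar_prod_left_zero[of _ m]\<close>)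
  have "char_matrix B e *\<^sub>v u = 0\<^sub>v m"
  proof (rule psd_quadratic_form_zero_imp_mult_zero)
    show "char_matrix B e \<in> carrier_mat m m" using B by simp
    show "transpose_mat (char_matrix B e) = char_matrix B e"
      using B sym by (simp add: char_matrix_def transpose_add) (auto intro!: eq_matI)
    show "0 \<le> v \<bullet> (char_matrix B e *\<^sub>v v)" if "v \<in> carrier_vec m" for v
      using rayleigh[OF that] char_matrix_quadratic_form[OF B that] by simp
    show "u \<bullet> (char_matrix B e *\<^sub>v u) = 0"
      using char_matrix_quadratic_form[OF B u(1)] u(2) by (simp add: e_def)
  qed (rule u(1))
  moreover have "u \<noteq> 0\<^sub>v m" using u by auto
  ultimately have "eigenvector B u e" using eigenvector_char_matrix[OF B] u by blast
  then show ?thesis using that rayleigh eigenvalue_def by blast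
qed

lemma rayleigh_le_max_eigenvalue:
  fixes B :: "real mat"
  assumes B: "B \<in> carrier_mat m m" and sym: "transpose_mat B = B" and m: "0 < m"
  obtains e where "eigenvalue B e" "\<And>v. v \<in> carrier_vec m \<Longrightarrow> v \<bullet> (B *\<^sub>v v) \<le> e * (v \<bullet> v)"
proof -
  have "- B \<in> carrier_mat m m" "transpose_mat (- B) = - B" using B sym by (auto simp: transpose_uminus)
  then obtain e where "eigenvalue (- B) e"
    and rayleigh: "\<And>v. v \<in> carrier_vec m \<Longrightarrow> e * (v \<bullet> v) \<le> v \<bullet> (- B *\<^sub>v v)"
    using min_eigenvalue_le_rayleigh m by blast
  then obtain u where u: "u \<in> carrier_vec m" "u \<noteq> 0\<^sub>v m" "- B *\<^sub>v u = e \<cdot>\<^sub>v u"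
    using B by (auto simp: eigenvalue_def eigenvector_def)
  have "B *\<^sub>v u = - (- B *\<^sub>v u)" using B u(1) by simp
  also have "\<dots> = - (e \<cdot>\<^sub>v u)" by (simp only: u(3))
  also have "\<dots> = (- e) \<cdot>\<^sub>v u" by (intro eq_vecI) auto
  finally have "eigenvector B u (- e)" using B u by (simp add: eigenvector_def)
  show ?thesis
  proof
    show "eigenvalue B (- e)" using \<open>eigenvector B u (- e)\<close> by (auto simp: eigenvalue_def)
    show "v \<bullet> (B *\<^sub>v v) \<le> - e * (v \<bullet> v)" if "v \<in> carrier_vec m" for v
      using rayleigh[OF that] that B by simp
  qed
qed

lemma gram_quadratic_form:
  fixes A :: "real mat"
  assumes A: "A \<in> carrier_mat n m" and v: "v \<in> carrier_vec m"
  shows "v \<bullet> ((transpose_mat A * A) *\<^sub>v v) = (A *\<^sub>v v) \<bullet> (A *\<^sub>v v)"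
proof -
  have "v \<bullet> ((transpose_mat A * A) *\<^sub>v v) = (transpose_mat A *\<^sub>v (A *\<^sub>v v)) \<bullet> v"
    using A v by (simp add: comm_scalar_prod[of v m])
  also have "\<dots> = (A *\<^sub>v v) \<bullet> (A *\<^sub>v v)"
    using A v by (simp add: transpose_vec_mult_scalar)
  finally show ?thesis .
qed

lemma transpose_gram_mat:
  fixes A :: "'a :: comm_semiring_0 mat"
  assumes "A \<in> carrier_mat n m"
  shows "transpose_mat (transpose_mat A * A) = transpose_mat A * A"
  using assms transpose_mult[of "transpose_mat A" m n A m] by simp

lemma gram_spectrum:
  fixes A :: "real mat"
  assumes A: "A \<in> carrier_mat n m"
  shows "finite (spectrum (transpose_mat A * A))"
    and "sing_vals A = sqrt ` spectrum (transpose_mat A * A)"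
    and "\<mu> \<in> spectrum (transpose_mat A * A) \<Longrightarrow> 0 \<le> \<mu>"
proof -
  have G: "transpose_mat A * A \<in> carrier_mat m m" using A by simp
  show "finite (spectrum (transpose_mat A * A))" by (rule card_finite_spectrum(1)[OF G])
  show "sing_vals A = sqrt ` spectrum (transpose_mat A * A)"
    by (simp add: sing_vals_def spectrum_def)
  assume "\<mu> \<in> spectrum (transpose_mat A * A)"
  then obtain u where u: "u \<in> carrier_vec m" "u \<noteq> 0\<^sub>v m" "(transpose_mat A * A) *\<^sub>v u = \<mu> \<cdot>\<^sub>v u"
    using G by (auto simp: spectrum_def eigenvalue_def eigenvector_def)
  have "\<mu> * (u \<bullet> u) = (A *\<^sub>v u) \<bullet> (A *\<^sub>v u)"
    using gram_quadratic_form[OF A u(1)] u by simp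
  moreover have "0 < u \<bullet> u"
    using u scalar_prod_self_nonneg[of u] scalar_prod_self_eq_0_iff[OF u(1)] by linarith
  ultimately show "0 \<le> \<mu>"
    using scalar_prod_self_nonneg[of "A *\<^sub>v u"] by (metis zero_le_mult_iff not_less)
qed

lemma sigma_min_lower_bound:
  fixes A :: "real mat"
  assumes A: "A \<in> carrier_mat n m" and m: "0 < m"
  shows "0 \<le> sigma_min A"
    and "v \<in> carrier_vec m \<Longrightarrow> (sigma_min A)\<^sup>2 * (v \<bullet> v) \<le> (A *\<^sub>v v) \<bullet> (A *\<^sub>v v)"
proof -
  let ?S = "spectrum (transpose_mat A * A)"
  have G: "transpose_mat A * A \<in> carrier_mat m m" using A by simp
  obtain e where e: "e \<in> ?S"
    and rayleigh_G: "\<And>v. v \<in> carrier_vec m \<Longrightarrow> e * (v \<bullet> v) \<le> v \<bullet> ((transpose_mat A * A) *\<^sub>v v)"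
    using min_eigenvalue_le_rayleigh[OF G transpose_gram_mat[OF A] m] unfolding spectrum_def by blast
  have rayleigh: "e * (v \<bullet> v) \<le> (A *\<^sub>v v) \<bullet> (A *\<^sub>v v)" if "v \<in> carrier_vec m" for v
    using rayleigh_G[OF that] gram_quadratic_form[OF A that] by simp
  have S: "finite ?S" "?S \<noteq> {}" using gram_spectrum(1)[OF A] e by auto
  have "sigma_min A = sqrt (Min ?S)"
    unfolding sigma_min_def gram_spectrum(2)[OF A]
    using mono_Min_commute[OF _ S, of sqrt] by (simp add: mono_def)
  moreover have "0 \<le> Min ?S" "Min ?S \<le> e" using S e gram_spectrum(3)[OF A] by auto
  ultimately show "0 \<le> sigma_min A"
    and "v \<in> carrier_vec m \<Longrightarrow> (sigma_min A)\<^sup>2 * (v \<bullet> v) \<le> (A *\<^sub>v v) \<bullet> (A *\<^sub>v v)"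
    using rayleigh[of v] scalar_prod_self_nonneg[of v] by (auto intro: order.trans[OF mult_right_mono])
qed

lemma sigma_max_upper_bound:
  fixes A :: "real mat"
  assumes A: "A \<in> carrier_mat n m" and m: "0 < m"
  shows "0 \<le> sigma_max A"
    and "v \<in> carrier_vec m \<Longrightarrow> (A *\<^sub>v v) \<bullet> (A *\<^sub>v v) \<le> (sigma_max A)\<^sup>2 * (v \<bullet> v)"
proof -
  let ?S = "spectrum (transpose_mat A * A)"
  have G: "transpose_mat A * A \<in> carrier_mat m m" using A by simp
  obtain e where e: "e \<in> ?S"
    and rayleigh_G: "\<And>v. v \<in> carrier_vec m \<Longrightarrow> v \<bullet> ((transpose_mat A * A) *\<^sub>v v) \<le> e * (v \<bullet> v)"
    using rayleigh_le_max_eigenvalue[OF G transpose_gram_mat[OF A] m] unfolding spectrum_def by blast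
  have rayleigh: "(A *\<^sub>v v) \<bullet> (A *\<^sub>v v) \<le> e * (v \<bullet> v)" if "v \<in> carrier_vec m" for v
    using rayleigh_G[OF that] gram_quadratic_form[OF A that] by simp
  have S: "finite ?S" "?S \<noteq> {}" using gram_spectrum(1)[OF A] e by auto
  have "sigma_max A = sqrt (Max ?S)"
    unfolding sigma_max_def gram_spectrum(2)[OF A]
    using mono_Max_commute[OF _ S, of sqrt] by (simp add: mono_def)
  moreover have "0 \<le> Max ?S" "e \<le> Max ?S" using S e gram_spectrum(3)[OF A] by auto
  ultimately show "0 \<le> sigma_max A"
    and "v \<in> carrier_vec m \<Longrightarrow> (A *\<^sub>v v) \<bullet> (A *\<^sub>v v) \<le> (sigma_max A)\<^sup>2 * (v \<bullet> v)"
    using rayleigh[of v] scalar_prod_self_nonneg[of v] by (auto intro: order.trans[OF _ mult_right_mono])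
qed

lemma kron_col_mat_one_carrier:
  "\<chi> \<in> carrier_vec s \<Longrightarrow> kron (col_mat \<chi>) (1\<^sub>m d) \<in> carrier_mat (s * d) d"
  by (simp add: kron_def col_mat_def)

lemma kron_col_mat_one_mult_mat_vec_nth:
  fixes \<chi> :: "real vec"
  assumes \<chi>: "\<chi> \<in> carrier_vec s" and B: "B \<in> carrier_mat d n" and r: "r \<in> carrier_vec n"
    and k: "k < s * d"
  shows "((kron (col_mat \<chi>) (1\<^sub>m d) * B) *\<^sub>v r) $ k = \<chi> $ (k div d) * (B *\<^sub>v r) $ (k mod d)"
proof -
  have d: "0 < d" using k by (cases "d = 0") auto
  have k_div: "k div d < s" using k d by (simp add: div_less_iff_less_mult)
  have K: "kron (col_mat \<chi>) (1\<^sub>m d) \<in> carrier_mat (s * d) d"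
    using kron_col_mat_one_carrier[OF \<chi>] .
  have "((kron (col_mat \<chi>) (1\<^sub>m d) * B) *\<^sub>v r) $ k = (kron (col_mat \<chi>) (1\<^sub>m d) *\<^sub>v (B *\<^sub>v r)) $ k"
    using K B r by simp
  also have "\<dots> = (\<Sum>j<d. (\<chi> $ (k div d) * (if k mod d = j then 1 else 0)) * (B *\<^sub>v r) $ j)"
    using \<chi> B r k k_div
    by (simp add: kron_def col_mat_def scalar_prod_def row_def atLeast0LessThan)
  also have "\<dots> = \<chi> $ (k div d) * (B *\<^sub>v r) $ (k mod d)"
    using d by (simp add: if_distrib[of "\<lambda>x. _ * x * _"] sum.delta cong: if_cong)
  finally show ?thesis .
qed

lemma kron_sum_bounds:
  fixes \<chi> w :: "nat \<Rightarrow> real vec"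
  assumes \<chi>: "\<And>i. i < T \<Longrightarrow> \<chi> i \<in> carrier_vec s" and w: "\<And>i. i < T \<Longrightarrow> w i \<in> carrier_vec d"
    and T: "0 < T"
  defines "g \<equiv> vec (s * d) (\<lambda>k. \<Sum>i<T. \<chi> i $ (k div d) * w i $ (k mod d))"
    and "\<Gamma> \<equiv> mat s T (\<lambda>(a, i). \<chi> i $ a)"
  shows "(sigma_min \<Gamma>)\<^sup>2 * (\<Sum>i<T. w i \<bullet> w i) \<le> g \<bullet> g"
    and "g \<bullet> g \<le> (sigma_max \<Gamma>)\<^sup>2 * (\<Sum>i<T. w i \<bullet> w i)"
proof -
  define \<omega> where "\<omega> b = vec T (\<lambda>i. w i $ b)" for b
  have \<Gamma>: "\<Gamma> \<in> carrier_mat s T" by (simp add: \<Gamma>_def)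
  have \<omega>: "\<omega> b \<in> carrier_vec T" for b by (simp add: \<omega>_def)
  have \<Gamma>\<omega>: "\<Gamma> *\<^sub>v \<omega> b \<in> carrier_vec s" for b using \<Gamma> \<omega> by simp
  have "g \<bullet> g = (\<Sum>a<s. \<Sum>b<d. (\<Sum>i<T. \<chi> i $ a * w i $ b)\<^sup>2)"
    using sum_lessThan_mult_div_mod[where f = "\<lambda>a b. (\<Sum>i<T. \<chi> i $ a * w i $ b)\<^sup>2" and a = s and b = d]
    by (simp add: g_def scalar_prod_self_sum_sq[of _ "s * d"])
  also have "\<dots> = (\<Sum>b<d. (\<Gamma> *\<^sub>v \<omega> b) \<bullet> (\<Gamma> *\<^sub>v \<omega> b))"
    using \<Gamma> by (subst sum.swap)
      (simp add: scalar_prod_self_sum_sq[OF \<Gamma>\<omega>] \<Gamma>_def \<omega>_def scalar_prod_def atLeast0LessThan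
        power2_eq_square)
  finally have g_eq: "g \<bullet> g = (\<Sum>b<d. (\<Gamma> *\<^sub>v \<omega> b) \<bullet> (\<Gamma> *\<^sub>v \<omega> b))" .
  have "(\<Sum>i<T. w i \<bullet> w i) = (\<Sum>i<T. \<Sum>b<d. (w i $ b)\<^sup>2)"
    by (rule sum.cong) (simp_all add: scalar_prod_self_sum_sq[OF w])
  also have "\<dots> = (\<Sum>b<d. \<omega> b \<bullet> \<omega> b)"
    by (subst sum.swap) (simp add: scalar_prod_self_sum_sq[of _ T] \<omega>_def)
  finally have w_eq: "(\<Sum>i<T. w i \<bullet> w i) = (\<Sum>b<d. \<omega> b \<bullet> \<omega> b)" .
  show "(sigma_min \<Gamma>)\<^sup>2 * (\<Sum>i<T. w i \<bullet> w i) \<le> g \<bullet> g"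
    unfolding g_eq w_eq sum_distrib_left
    by (intro sum_mono sigma_min_lower_bound(2)[OF \<Gamma> T \<omega>])
  show "g \<bullet> g \<le> (sigma_max \<Gamma>)\<^sup>2 * (\<Sum>i<T. w i \<bullet> w i)"
    unfolding g_eq w_eq sum_distrib_left
    by (intro sum_mono sigma_max_upper_bound(2)[OF \<Gamma> T \<omega>])
qed

lemma sum_mult_vec_bounds:
  fixes M :: "nat \<Rightarrow> real mat"
  assumes M: "\<And>i. i < T \<Longrightarrow> M i \<in> carrier_mat n m" and r: "\<And>i. i < T \<Longrightarrow> r i \<in> carrier_vec m"
    and m: "0 < m" and T: "0 < T"
  shows "(MIN i\<in>{..<T}. sigma_min (M i))\<^sup>2 * (\<Sum>i<T. r i \<bullet> r i)
           \<le> (\<Sum>i<T. (M i *\<^sub>v r i) \<bullet> (M i *\<^sub>v r i))"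
    and "(\<Sum>i<T. (M i *\<^sub>v r i) \<bullet> (M i *\<^sub>v r i))
           \<le> (MAX i\<in>{..<T}. sigma_max (M i))\<^sup>2 * (\<Sum>i<T. r i \<bullet> r i)"
proof -
  have "0 \<le> (MIN i\<in>{..<T}. sigma_min (M i))"
    using T sigma_min_lower_bound(1)[OF M m] by (subst Min_ge_iff) auto
  then have min_le: "(MIN i\<in>{..<T}. sigma_min (M i))\<^sup>2 \<le> (sigma_min (M i))\<^sup>2" if "i < T" for i
    using that by (intro power_mono) auto
  have max_ge: "(sigma_max (M i))\<^sup>2 \<le> (MAX i\<in>{..<T}. sigma_max (M i))\<^sup>2" if "i < T" for i
    using that sigma_max_upper_bound(1)[OF M m] by (intro power_mono) auto
  have "(MIN i\<in>{..<T}. sigma_min (M i))\<^sup>2 * (r i \<bullet> r i) \<le> (M i *\<^sub>v r i) \<bullet> (M i *\<^sub>v r i)"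
    if "i < T" for i
    using mult_right_mono[OF min_le[OF that] scalar_prod_self_nonneg[of "r i"]]
      sigma_min_lower_bound(2)[OF M[OF that] m r[OF that]] by linarith
  then show "(MIN i\<in>{..<T}. sigma_min (M i))\<^sup>2 * (\<Sum>i<T. r i \<bullet> r i)
      \<le> (\<Sum>i<T. (M i *\<^sub>v r i) \<bullet> (M i *\<^sub>v r i))"
    unfolding sum_distrib_left by (auto intro!: sum_mono)
  have "(M i *\<^sub>v r i) \<bullet> (M i *\<^sub>v r i) \<le> (MAX i\<in>{..<T}. sigma_max (M i))\<^sup>2 * (r i \<bullet> r i)"
    if "i < T" for i
    using mult_right_mono[OF max_ge[OF that] scalar_prod_self_nonneg[of "r i"]]
      sigma_max_upper_bound(2)[OF M[OF that] m r[OF that]] by linarith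
  then show "(\<Sum>i<T. (M i *\<^sub>v r i) \<bullet> (M i *\<^sub>v r i))
      \<le> (MAX i\<in>{..<T}. sigma_max (M i))\<^sup>2 * (\<Sum>i<T. r i \<bullet> r i)"
    unfolding sum_distrib_left by (auto intro!: sum_mono)
qed

lemma kron_sum_mult_vec_norm_bounds:
  fixes \<chi> r :: "nat \<Rightarrow> real vec" and M :: "nat \<Rightarrow> real mat"
  assumes \<chi>: "\<And>i. i < T \<Longrightarrow> \<chi> i \<in> carrier_vec s" and M: "\<And>i. i < T \<Longrightarrow> M i \<in> carrier_mat n m"
    and r: "\<And>i. i < T \<Longrightarrow> r i \<in> carrier_vec m" and m: "0 < m" and T: "0 < T"
  defines "g \<equiv> vec (s * n) (\<lambda>k. \<Sum>i<T. \<chi> i $ (k div n) * (M i *\<^sub>v r i) $ (k mod n))"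
    and "\<Gamma> \<equiv> mat s T (\<lambda>(a, i). \<chi> i $ a)"
  shows "sigma_min \<Gamma> * (MIN i\<in>{..<T}. sigma_min (M i)) * sqrt (\<Sum>i<T. r i \<bullet> r i) \<le> vnorm g"
    and "vnorm g \<le> sigma_max \<Gamma> * (MAX i\<in>{..<T}. sigma_max (M i)) * sqrt (\<Sum>i<T. r i \<bullet> r i)"
proof -
  define w where "w i = M i *\<^sub>v r i" for i
  define R where "R = (\<Sum>i<T. r i \<bullet> r i)"
  have w: "w i \<in> carrier_vec n" if "i < T" for i
    unfolding w_def by (rule mult_mat_vec_carrier[OF M r]) (use that in auto)
  note g_bounds = kron_sum_bounds[where \<chi> = \<chi> and w = w, OF \<chi> w T, unfolded w_def, folded g_def \<Gamma>_def]
  note w_bounds = sum_mult_vec_bounds[where M = M and r = r, OF M r m T, folded R_def]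
  have R: "0 \<le> R" unfolding R_def by (simp add: sum_nonneg scalar_prod_self_nonneg)
  have "(sigma_min \<Gamma> * (MIN i\<in>{..<T}. sigma_min (M i)) * sqrt R)\<^sup>2
      = (sigma_min \<Gamma>)\<^sup>2 * ((MIN i\<in>{..<T}. sigma_min (M i))\<^sup>2 * R)"
    using R by (simp add: power_mult_distrib)
  also have "\<dots> \<le> (sigma_min \<Gamma>)\<^sup>2 * (\<Sum>i<T. (M i *\<^sub>v r i) \<bullet> (M i *\<^sub>v r i))"
    by (rule mult_left_mono[OF w_bounds(1) zero_le_power2])
  also have "\<dots> \<le> g \<bullet> g" by (rule g_bounds(1))
  finally show "sigma_min \<Gamma> * (MIN i\<in>{..<T}. sigma_min (M i)) * sqrt (\<Sum>i<T. r i \<bullet> r i) \<le> vnorm g"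
    unfolding R_def[symmetric] vnorm_eq_sqrt_scalar_prod by (rule real_le_rsqrt)
  have "g \<bullet> g \<le> (sigma_max \<Gamma>)\<^sup>2 * (\<Sum>i<T. (M i *\<^sub>v r i) \<bullet> (M i *\<^sub>v r i))" by (rule g_bounds(2))
  also have "\<dots> \<le> (sigma_max \<Gamma>)\<^sup>2 * ((MAX i\<in>{..<T}. sigma_max (M i))\<^sup>2 * R)"
    by (rule mult_left_mono[OF w_bounds(2) zero_le_power2])
  also have "\<dots> = (sigma_max \<Gamma> * (MAX i\<in>{..<T}. sigma_max (M i)) * sqrt R)\<^sup>2"
    using R by (simp add: power_mult_distrib)
  finally have upper: "g \<bullet> g \<le> (sigma_max \<Gamma> * (MAX i\<in>{..<T}. sigma_max (M i)) * sqrt R)\<^sup>2" .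
  have \<Gamma>: "\<Gamma> \<in> carrier_mat s T" by (simp add: \<Gamma>_def)
  have "0 \<le> (MAX i\<in>{..<T}. sigma_max (M i))"
    using T sigma_max_upper_bound(1)[OF M m] by (subst Max_ge_iff) auto
  then have "0 \<le> sigma_max \<Gamma> * (MAX i\<in>{..<T}. sigma_max (M i)) * sqrt R"
    using sigma_max_upper_bound(1)[OF \<Gamma> T] R by simp
  then show "vnorm g \<le> sigma_max \<Gamma> * (MAX i\<in>{..<T}. sigma_max (M i)) * sqrt (\<Sum>i<T. r i \<bullet> r i)"
    unfolding R_def[symmetric] vnorm_eq_sqrt_scalar_prod using upper by (rule real_le_lsqrt)
qed

lemma relu_dim [simp]: "dim_vec (relu v) = dim_vec v"
  by (simp add: relu_def)

lemma enc_carrier: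
  assumes E_dim: "\<forall>k\<in>{1..\<kappa>}. E k \<in> carrier_mat (d (k - 1)) (d k)"
    and x: "x \<in> carrier_vec (d 0)"
  shows "k \<le> \<kappa> \<Longrightarrow> enc E x k \<in> carrier_vec (d k)"
proof (induction k)
  case (Suc k)
  then have "Suc k \<in> {1..\<kappa>}" by simp
  then have "dim_col (E (Suc k)) = d (Suc k)" using E_dim by (metis carrier_matD(2))
  then show ?case
    by (simp only: enc.simps relu_dim dim_mult_mat_vec index_transpose_mat carrier_vec_def mem_Collect_eq)
qed (use x in simp)

lemma skip_carrier:
  assumes S_dim: "\<forall>k\<in>{1..\<kappa>}. S k \<in> carrier_mat (d (k - 1)) (s k)" and l: "l \<in> {1..\<kappa>}"
  shows "skip E S x l \<in> carrier_vec (s l)"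
proof -
  have "dim_col (S l) = s l" using S_dim l by (metis carrier_matD(2))
  then show ?thesis
    by (simp only: skip_def relu_dim dim_mult_mat_vec index_transpose_mat carrier_vec_def mem_Collect_eq)
qed

lemma dec_aux_carrier:
  assumes E_dim: "\<forall>k\<in>{1..\<kappa>}. E k \<in> carrier_mat (d (k - 1)) (d k)"
    and St_dim: "\<forall>k\<in>{1..\<kappa>}. St k \<in> carrier_mat (d (k - 1)) (s k)"
    and x: "x \<in> carrier_vec (d 0)"
  shows "j \<le> \<kappa> \<Longrightarrow> dec_aux \<kappa> E D S St x j \<in> carrier_vec (d (\<kappa> - j))"
proof (induction j)
  case 0
  then show ?case using enc_carrier[OF E_dim x] by simp
next
  case (Suc j)
  then have "\<kappa> - j \<in> {1..\<kappa>}" and "\<kappa> - j - 1 = \<kappa> - Suc j" by auto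
  then have "dim_row (St (\<kappa> - j)) = d (\<kappa> - Suc j)" using St_dim by (metis carrier_matD(1))
  then show ?case
    by (simp only: dec_aux.simps relu_dim index_add_vec(2) dim_mult_mat_vec carrier_vec_def
        mem_Collect_eq)
qed

lemma net_carrier:
  assumes "\<forall>k\<in>{1..\<kappa>}. E k \<in> carrier_mat (d (k - 1)) (d k)"
    and "\<forall>k\<in>{1..\<kappa>}. St k \<in> carrier_mat (d (k - 1)) (s k)"
    and "x \<in> carrier_vec (d 0)"
  shows "net \<kappa> E D S St x \<in> carrier_vec (d 0)"
  using dec_aux_carrier[OF assms, of \<kappa>] by (simp add: net_def dec_def)

lemma Lam_carrier:
  assumes St_dim: "\<forall>k\<in>{1..\<kappa>}. St k \<in> carrier_mat (d (k - 1)) (s k)" and l: "l \<in> {1..\<kappa>}"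
  shows "Lam \<kappa> E D S St x l \<in> carrier_mat (d (l - 1)) (d (l - 1))"
proof -
  have "dim_row (St l) = d (l - 1)" using St_dim l by (metis carrier_matD(1))
  then have "dim_vec (preact \<kappa> E D S St x l) = d (l - 1)"
    by (simp only: preact_def index_add_vec(2) dim_mult_mat_vec)
  then show ?thesis by (simp only: Lam_def Let_def mat_carrier)
qed

lemma Ups_carrier:
  assumes D_dim: "\<forall>k\<in>{1..\<kappa>}. D k \<in> carrier_mat (d (k - 1)) (d k)"
    and St_dim: "\<forall>k\<in>{1..\<kappa>}. St k \<in> carrier_mat (d (k - 1)) (s k)"
  shows "k \<le> \<kappa> \<Longrightarrow> Ups \<kappa> E D S St x (d 0) k \<in> carrier_mat (d 0) (d k)"
proof (induction k)
  case (Suc k)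
  then have "Suc k \<in> {1..\<kappa>}" by simp
  then have "Lam \<kappa> E D S St x (Suc k) \<in> carrier_mat (d (Suc k - 1)) (d (Suc k - 1))"
    and "D (Suc k) \<in> carrier_mat (d (Suc k - 1)) (d (Suc k))"
    using Lam_carrier[OF St_dim] D_dim by blast+
  moreover have "Ups \<kappa> E D S St x (d 0) k \<in> carrier_mat (d 0) (d k)" using Suc by simp
  ultimately show ?case by (simp only: Ups.simps diff_Suc_1) (blast intro: mult_carrier_mat)
qed simp

lemma skip_gradient_term_nth:
  assumes D_dim: "\<forall>k\<in>{1..\<kappa>}. D k \<in> carrier_mat (d (k - 1)) (d k)"
    and S_dim: "\<forall>k\<in>{1..\<kappa>}. S k \<in> carrier_mat (d (k - 1)) (s k)"
    and St_dim: "\<forall>k\<in>{1..\<kappa>}. St k \<in> carrier_mat (d (k - 1)) (s k)"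
    and l: "l \<in> {1..\<kappa>}" and r: "r \<in> carrier_vec (d 0)" and k: "k < s l * d (l - 1)"
  shows "((kron (col_mat (skip E S x l)) (1\<^sub>m (d (l - 1))) * Lam \<kappa> E D S St x l
            * transpose_mat (Ups \<kappa> E D S St x (d 0) (l - 1))) *\<^sub>v r) $ k
         = skip E S x l $ (k div d (l - 1))
           * ((Lam \<kappa> E D S St x l * transpose_mat (Ups \<kappa> E D S St x (d 0) (l - 1))) *\<^sub>v r)
             $ (k mod d (l - 1))"
proof -
  have L: "Lam \<kappa> E D S St x l \<in> carrier_mat (d (l - 1)) (d (l - 1))"
    using Lam_carrier[OF St_dim l] .
  have "l - 1 \<le> \<kappa>" using l by auto
  then have U: "transpose_mat (Ups \<kappa> E D S St x (d 0) (l - 1)) \<in> carrier_mat (d (l - 1)) (d 0)"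
    using Ups_carrier[OF D_dim St_dim] by simp
  have K: "kron (col_mat (skip E S x l)) (1\<^sub>m (d (l - 1))) \<in> carrier_mat (s l * d (l - 1)) (d (l - 1))"
    using kron_col_mat_one_carrier[OF skip_carrier[OF S_dim l]] .
  show ?thesis
    unfolding assoc_mult_mat[OF K L U]
    using kron_col_mat_one_mult_mat_vec_nth[OF skip_carrier[OF S_dim l] mult_carrier_mat[OF L U] r k] .
qed

theorem lemma2:
  fixes \<kappa> :: nat and d s :: "nat \<Rightarrow> nat"
    and E D S St :: "nat \<Rightarrow> real mat"
    and T :: nat and xs ys :: "nat \<Rightarrow> real vec" and l :: nat
  assumes dims_pos: "\<forall>k\<le>\<kappa>. d k > 0" "\<forall>k\<in>{1..\<kappa>}. s k > 0"
    and E_dim: "\<forall>k\<in>{1..\<kappa>}. E k \<in> carrier_mat (d (k - 1)) (d k)"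
    and D_dim: "\<forall>k\<in>{1..\<kappa>}. D k \<in> carrier_mat (d (k - 1)) (d k)"
    and S_dim: "\<forall>k\<in>{1..\<kappa>}. S k \<in> carrier_mat (d (k - 1)) (s k)"
    and St_dim: "\<forall>k\<in>{1..\<kappa>}. St k \<in> carrier_mat (d (k - 1)) (s k)"
    and T_pos: "T > 0"
    and data: "\<forall>i<T. xs i \<in> carrier_vec (d 0) \<and> ys i \<in> carrier_vec (d 0)"
    and l: "l \<in> {1..\<kappa>}"
    and sT: "s l \<ge> T" and dd: "d (l - 1) \<ge> d 0"
  defines "C \<equiv> (1/2) * (\<Sum>i<T. (vnorm (net \<kappa> E D S St (xs i) - ys i))^2)"
    and "grad \<equiv> vec (s l * d (l - 1)) (\<lambda>k. \<Sum>i<T.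
           ((kron (col_mat (skip E S (xs i) l)) (1\<^sub>m (d (l - 1)))
             * Lam \<kappa> E D S St (xs i) l
             * transpose_mat (Ups \<kappa> E D S St (xs i) (d 0) (l - 1)))
            *\<^sub>v (net \<kappa> E D S St (xs i) - ys i)) $ k)"
    and "\<Gamma> \<equiv> mat (s l) T (\<lambda>(a,i). skip E S (xs i) l $ a)"
    and "M \<equiv> (\<lambda>i. Lam \<kappa> E D S St (xs i) l * transpose_mat (Ups \<kappa> E D S St (xs i) (d 0) (l - 1)))"
  shows "vnorm grad \<ge> sigma_min \<Gamma> * (MIN i\<in>{..<T}. sigma_min (M i)) * sqrt (2 * C)
         \<and> vnorm grad \<le> sigma_max \<Gamma> * (MAX i\<in>{..<T}. sigma_max (M i)) * sqrt (2 * C)"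
proof -
  define r where "r i = net \<kappa> E D S St (xs i) - ys i" for i
  have r: "r i \<in> carrier_vec (d 0)" if "i < T" for i
    using net_carrier[OF E_dim St_dim] data that by (auto simp: r_def)
  have "l - 1 \<le> \<kappa>" using l by auto
  then have M: "M i \<in> carrier_mat (d (l - 1)) (d 0)" for i
    unfolding M_def using Lam_carrier[OF St_dim l] Ups_carrier[OF D_dim St_dim]
    by (meson mult_carrier_mat transpose_carrier_mat)
  have "grad $ k = (\<Sum>i<T. skip E S (xs i) l $ (k div d (l - 1)) * (M i *\<^sub>v r i) $ (k mod d (l - 1)))"
    if "k < s l * d (l - 1)" for k
    using that skip_gradient_term_nth[OF D_dim S_dim St_dim l r]
    by (auto simp: grad_def M_def r_def intro!: sum.cong)
  then have grad_eq: "grad = vec (s l * d (l - 1))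
      (\<lambda>k. \<Sum>i<T. skip E S (xs i) l $ (k div d (l - 1)) * (M i *\<^sub>v r i) $ (k mod d (l - 1)))"
    by (intro eq_vecI) (simp_all add: grad_def)
  have C_eq: "2 * C = (\<Sum>i<T. r i \<bullet> r i)"
    by (simp add: C_def r_def vnorm_eq_sqrt_scalar_prod scalar_prod_self_nonneg)
  have "0 < d 0" using dims_pos by simp
  from kron_sum_mult_vec_norm_bounds[where \<chi> = "\<lambda>i. skip E S (xs i) l" and M = M and r = r,
      OF skip_carrier[OF S_dim l] M r \<open>0 < d 0\<close> T_pos, folded grad_eq \<Gamma>_def C_eq]
  show ?thesis by simp
qed

end
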